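(* Let $G=(V,E)$ be an undirected unweighted graph with $n$ vertices, let $k\ge 1$ be an integer, and let $H=(V,E')$ with $E'\subseteq E$ be a $k$-spanner of $G$ whose girth is at least $k+2$. Then there exists a total ordering $\sigma$ of $E$ such that the greedy algorithm run on input $\langle G,k\rangle$ with edge ordering $\sigma$ outputs exactly $H$.
   Context: All graphs are undirected and unweighted. For a graph $G=(V,E)$ with $n$ vertices and an integer $k$, a $k$-spanner of $G$ is a subgraph $H=(V,E')$, $E'\subseteq E$, such that $\mathrm{dist}_H(u,v)\le k\cdot \mathrm{dist}_G(u,v)$ for all $(u,v)\in V\times V$. The girth of a graph is the length of its shortest cycle ($+\infty$ if it is acyclic). The greedy algorithm on input $\langle G,k\rangle$ with a total ordering $\sigma=(e_1<\dots<e_m)$ of $E$: start with $H=(V,\emptyset)$; for $i=1,\dots,m$, with $e_i=(u,v)$, add $e_i$ to $H$ if $\mathrm{dist}_H(u,v)>k$ (current $H$), otherwise do nothing; output the final $H$. *)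

theory Defs
  imports Main "HOL-Library.Extended_Nat"
begin

definition graph :: "'a set \<Rightarrow> 'a set set \<Rightarrow> bool" where
  "graph V E \<longleftrightarrow> finite V \<and> E \<subseteq> {{u, v} | u v. u \<in> V \<and> v \<in> V \<and> u \<noteq> v}"

text \<open>A walk in edge set F, given as a nonempty vertex list; its length is length xs - 1.\<close>
definition walk :: "'a set set \<Rightarrow> 'a list \<Rightarrow> bool" where
  "walk F xs \<longleftrightarrow> xs \<noteq> [] \<and> (\<forall>i. Suc i < length xs \<longrightarrow> {xs ! i, xs ! Suc i} \<in> F)"

text \<open>Distance in the graph with edge set F (infinity if disconnected).\<close>
definition gdist :: "'a set set \<Rightarrow> 'a \<Rightarrow> 'a \<Rightarrow> enat" where
  "gdist F u v = (INF xs \<in> {xs. walk F xs \<and> hd xs = u \<and> last xs = v}. enat (length xs - 1))"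

definition is_spanner :: "'a set \<Rightarrow> 'a set set \<Rightarrow> nat \<Rightarrow> 'a set set \<Rightarrow> bool" where
  "is_spanner V E k E' \<longleftrightarrow> E' \<subseteq> E \<and>
     (\<forall>u \<in> V. \<forall>v \<in> V. gdist E' u v \<le> enat k * gdist E u v)"

text \<open>Cycles: closed walks with at least 3 edges whose vertices are distinct apart from the
  repeated endpoint.\<close>
definition is_cycle :: "'a set set \<Rightarrow> 'a list \<Rightarrow> bool" where
  "is_cycle F xs \<longleftrightarrow> walk F xs \<and> length xs \<ge> 4 \<and> hd xs = last xs \<and> distinct (tl xs)"

definition girth :: "'a set set \<Rightarrow> enat" where
  "girth F = (INF xs \<in> {xs. is_cycle F xs}. enat (length xs - 1))"

fun greedy_aux :: "nat \<Rightarrow> 'a set list \<Rightarrow> 'a set set \<Rightarrow> 'a set set" where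
  "greedy_aux k [] H = H"
| "greedy_aux k (e # es) H =
     greedy_aux k es (if (\<exists>u v. e = {u, v} \<and> gdist H u v > enat k) then insert e H else H)"

definition greedy :: "nat \<Rightarrow> 'a set list \<Rightarrow> 'a set set" where
  "greedy k \<sigma> = greedy_aux k \<sigma> {}"

end

theory Submission
  imports Defs
begin

text \<open>List the edges of E' first and the remaining edges of E after them. When an edge
  {u, v} of E' is examined, the current output consists of other edges of E' only, so a walk
  of length at most k from u to v in it would close, together with {u, v}, a cycle of length
  at most k + 1 in E'. As the girth of E' is at least k + 2, every edge of E' is kept. Every
  later edge {u, v} of E has dist_E'(u, v) \<le> k \<cdot> dist_E(u, v) = k and is rejected.\<close>

lemma graph_subset: "graph V E \<Longrightarrow> F \<subseteq> E \<Longrightarrow> graph V F"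
  unfolding graph_def by blast

lemma graph_edgeE:
  assumes "graph V E" "e \<in> E"
  obtains u v where "e = {u, v}" "u \<noteq> v"
  using assms unfolding graph_def by blast

lemma graph_edge_subset: "graph V E \<Longrightarrow> e \<in> E \<Longrightarrow> e \<subseteq> V"
  unfolding graph_def by blast

lemma graph_finite_edges:
  assumes "graph V E"
  shows "finite E"
proof (rule finite_subset)
  show "E \<subseteq> Pow V"
    using graph_edge_subset[OF assms] by blast
  show "finite (Pow V)"
    using assms unfolding graph_def by simp
qed

lemma not_walk_Nil [simp]: "\<not> walk F []"
  by (simp add: walk_def)

lemma walk_singleton [simp]: "walk F [x]"
  by (simp add: walk_def)

lemma walk_Cons_Cons [simp]: "walk F (x # y # ys) \<longleftrightarrow> {x, y} \<in> F \<and> walk F (y # ys)"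
  unfolding walk_def by (auto simp: nth_Cons split: nat.split)

lemma walk_mono: "walk F xs \<Longrightarrow> F \<subseteq> G \<Longrightarrow> walk G xs"
  unfolding walk_def by blast

lemma walk_append_iff: "walk F (xs @ y # zs) \<longleftrightarrow> walk F (xs @ [y]) \<and> walk F (y # zs)"
  by (induction xs rule: remdups_adj.induct) auto

lemma walk_shortcut:
  assumes "walk F (xs @ y # ys @ y # zs)"
  shows "walk F (xs @ y # zs)"
proof -
  have "walk F (xs @ [y])" "walk F ((y # ys) @ y # zs)"
    using assms walk_append_iff[of F xs y "ys @ y # zs"] by simp_all
  then show ?thesis
    using walk_append_iff[of F "y # ys" y zs] walk_append_iff[of F xs y zs] by simp
qed

lemma walk_obtain_distinct:
  assumes "walk F p"
  obtains q where "walk F q" "hd q = hd p" "last q = last p" "distinct q" "length q \<le> length p"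
  using assms
proof (induction "length p" arbitrary: p rule: less_induct)
  case less
  show ?case
  proof (cases "distinct p")
    case True
    then show ?thesis using less.prems by blast
  next
    case False
    then obtain xs y ys zs where p: "p = xs @ [y] @ ys @ [y] @ zs"
      using not_distinct_decomp by blast
    define p' where "p' = xs @ y # zs"
    have "walk F p'"
      using \<open>walk F p\<close> unfolding p p'_def by (simp add: walk_shortcut)
    have "hd p' = hd p" "last p' = last p" "length p' < length p"
      unfolding p p'_def by (cases xs; cases zs; simp)+
    show ?thesis
    proof (rule less.hyps[of p'])
      fix q
      assume "walk F q" "hd q = hd p'" "last q = last p'" "distinct q" "length q \<le> length p'"
      then show thesis
        using less.prems(1) \<open>hd p' = hd p\<close> \<open>last p' = last p\<close> \<open>length p' < length p\<close>
        by simp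
    qed fact+
  qed
qed

lemma gdist_le_walk_length: "walk F p \<Longrightarrow> gdist F (hd p) (last p) \<le> enat (length p - 1)"
  unfolding gdist_def by (rule INF_lower) simp

lemma gdist_edge: "{u, v} \<in> F \<Longrightarrow> gdist F u v \<le> 1"
  using gdist_le_walk_length[of F "[u, v]"] by (simp add: one_enat_def)

lemma gdist_le_enatE:
  assumes "gdist F u v \<le> enat k"
  obtains p where "walk F p" "hd p = u" "last p = v" "length p \<le> Suc k"
proof -
  have "gdist F u v < enat (Suc k)"
    using assms by (simp add: Suc_ile_eq order_le_less_trans)
  then obtain p where "walk F p" "hd p = u" "last p = v" "enat (length p - 1) < enat (Suc k)"
    unfolding gdist_def INF_less_iff by blast
  then show ?thesis using that by simp
qed

lemma girth_le_cycle_length: "is_cycle F xs \<Longrightarrow> girth F \<le> enat (length xs - 1)"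
  unfolding girth_def by (rule INF_lower) simp

lemma gdist_gt_of_large_girth:
  assumes girth: "girth F \<ge> enat (k + 2)"
    and "H \<subseteq> F" "{u, v} \<in> F" "{u, v} \<notin> H" "u \<noteq> v"
  shows "gdist H u v > enat k"
proof (rule ccontr)
  assume "\<not> gdist H u v > enat k"
  then have "gdist H u v \<le> enat k"
    by (simp add: not_less)
  then obtain p where p: "walk H p" "hd p = u" "last p = v" "length p \<le> Suc k"
    by (rule gdist_le_enatE)
  obtain q where q: "walk H q" "hd q = u" "last q = v" "distinct q" "length q \<le> Suc k"
    using p by (metis walk_obtain_distinct order.trans)
  \<comment> \<open>q is neither [u] (as u \<noteq> v) nor [u, v] (as {u, v} \<notin> H)\<close>
  obtain w x xs where q_eq: "q = u # w # x # xs"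
    using q \<open>u \<noteq> v\<close> \<open>{u, v} \<notin> H\<close>
    by (cases q rule: remdups_adj.cases; cases "tl (tl q)") auto
  have "walk F (v # q)"
    using q(1) \<open>H \<subseteq> F\<close> \<open>{u, v} \<in> F\<close> unfolding q_eq
    by (auto simp: insert_commute intro: walk_mono)
  then have "is_cycle F (v # q)"
    using q unfolding is_cycle_def q_eq by simp
  then have "girth F \<le> enat (length q)"
    using girth_le_cycle_length by fastforce
  with girth have "k + 2 \<le> length q"
    by (metis enat_ord_simps(1) order.trans)
  with q(5) show False
    by simp
qed

lemma greedy_aux_append: "greedy_aux k (xs @ ys) H = greedy_aux k ys (greedy_aux k xs H)"
  by (induction xs arbitrary: H) simp_all

lemma greedy_aux_accepts_all:
  assumes "graph V F" "girth F \<ge> enat (k + 2)"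
    and "distinct xs" "H \<union> set xs \<subseteq> F" "H \<inter> set xs = {}"
  shows "greedy_aux k xs H = H \<union> set xs"
  using assms(3-5)
proof (induction xs arbitrary: H)
  case Nil
  then show ?case by simp
next
  case (Cons e xs)
  from \<open>graph V F\<close> obtain u v where uv: "e = {u, v}" "u \<noteq> v"
    by (rule graph_edgeE) (use Cons.prems in auto)
  then have "gdist H u v > enat k"
    using Cons.prems by (intro gdist_gt_of_large_girth[OF assms(2)]) auto
  with uv have "greedy_aux k (e # xs) H = greedy_aux k xs (insert e H)"
    by auto
  also have "\<dots> = insert e H \<union> set xs"
    using Cons.prems by (intro Cons.IH) auto
  finally show ?case by simp
qed

lemma greedy_aux_rejects_all:
  assumes "\<And>u v. {u, v} \<in> set xs \<Longrightarrow> gdist H u v \<le> enat k"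
  shows "greedy_aux k xs H = H"
  using assms
proof (induction xs)
  case (Cons e xs)
  then have "\<not> (\<exists>u v. e = {u, v} \<and> gdist H u v > enat k)"
    by (auto simp: not_less)
  then have "greedy_aux k (e # xs) H = greedy_aux k xs H"
    by (simp only: greedy_aux.simps if_False)
  with Cons show ?case
    by simp
qed simp

lemma spanner_gdist_edge:
  assumes "graph V E" "is_spanner V E k E'" "{u, v} \<in> E"
  shows "gdist E' u v \<le> enat k"
proof -
  have "u \<in> V" "v \<in> V"
    using graph_edge_subset[OF assms(1,3)] by auto
  then have "gdist E' u v \<le> enat k * gdist E u v"
    using assms(2) unfolding is_spanner_def by blast
  also have "\<dots> \<le> enat k"
    using gdist_edge[OF assms(3)] mult_left_mono[of _ 1 "enat k"] by simp
  finally show ?thesis .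
qed

theorem proposition1p3:
  fixes V :: "'a set" and E E' :: "'a set set" and k :: nat
  assumes "graph V E"
    and "k \<ge> 1"
    and "is_spanner V E k E'"
    and "girth E' \<ge> enat (k + 2)"
  shows "\<exists>\<sigma>. distinct \<sigma> \<and> set \<sigma> = E \<and> greedy k \<sigma> = E'"
proof -
  have "E' \<subseteq> E"
    using assms(3) unfolding is_spanner_def by blast
  moreover have "finite E"
    using assms(1) by (rule graph_finite_edges)
  ultimately obtain xs ys where xs: "distinct xs" "set xs = E'" and ys: "distinct ys" "set ys = E - E'"
    by (meson finite_Diff finite_distinct_list finite_subset)
  have "greedy_aux k xs {} = E'"
    using greedy_aux_accepts_all[OF graph_subset[OF assms(1) \<open>E' \<subseteq> E\<close>] assms(4) xs(1)] xs(2)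
    by simp
  moreover have "greedy_aux k ys E' = E'"
    using spanner_gdist_edge[OF assms(1,3)] ys(2) by (intro greedy_aux_rejects_all) auto
  ultimately have "greedy k (xs @ ys) = E'"
    unfolding greedy_def greedy_aux_append by simp
  moreover have "distinct (xs @ ys)" "set (xs @ ys) = E"
    using xs ys \<open>E' \<subseteq> E\<close> by auto
  ultimately show ?thesis
    by blast
qed

end
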